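(* For every positive integer $k$ there exists $c_k>0$ such that every graph $G$ on $n\geq 2$ vertices that contains neither the path $P_k$ nor its complement $\overline{P_k}$ as an induced subgraph contains two disjoint vertex sets $X,Y$, each of size at least $c_k\cdot n$, such that either every vertex of $X$ is adjacent to every vertex of $Y$, or no vertex of $X$ is adjacent to any vertex of $Y$ (no condition is imposed on edges inside $X$ or inside $Y$). Consequently, for every $k$ there exists $c'_k>0$ such that every graph on $n$ vertices with no induced $P_k$ and no induced $\overline{P_k}$ contains a clique or a stable set of size at least $n^{c'_k}$.
   Context: All graphs are finite and simple. $P_k$ denotes the path on $k$ vertices and $\overline{P_k}$ its complement graph. "Contains $H$ as an induced subgraph" means some subset of vertices induces a graph isomorphic to $H$. *)

theory Defs
  imports Complex_Main
begin

text \<open>A finite simple graph: finite vertex set V (of naturals, w.l.o.g. up to isomorphism)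
 and a symmetric irreflexive adjacency relation E (only its restriction to V matters).\<close>
definition simple_graph :: "nat set \<Rightarrow> (nat \<Rightarrow> nat \<Rightarrow> bool) \<Rightarrow> bool" where
  "simple_graph V E \<longleftrightarrow> finite V \<and> (\<forall>x y. E x y \<longrightarrow> E y x) \<and> (\<forall>x. \<not> E x x)"

definition contains_induced :: "nat set \<Rightarrow> (nat \<Rightarrow> nat \<Rightarrow> bool) \<Rightarrow> nat \<Rightarrow> (nat \<Rightarrow> nat \<Rightarrow> bool) \<Rightarrow> bool" where
  "contains_induced V E k H \<longleftrightarrow>
     (\<exists>f. inj_on f {0..<k} \<and> f ` {0..<k} \<subseteq> V \<and>
          (\<forall>i<k. \<forall>j<k. i \<noteq> j \<longrightarrow> (E (f i) (f j) \<longleftrightarrow> H i j)))"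

definition path_adj :: "nat \<Rightarrow> nat \<Rightarrow> bool" where
  "path_adj i j \<longleftrightarrow> i + 1 = j \<or> j + 1 = i"

definition copath_adj :: "nat \<Rightarrow> nat \<Rightarrow> bool" where
  "copath_adj i j \<longleftrightarrow> i \<noteq> j \<and> \<not> path_adj i j"

definition is_clique :: "(nat \<Rightarrow> nat \<Rightarrow> bool) \<Rightarrow> nat set \<Rightarrow> bool" where
  "is_clique E S \<longleftrightarrow> (\<forall>x\<in>S. \<forall>y\<in>S. x \<noteq> y \<longrightarrow> E x y)"

definition is_stable :: "(nat \<Rightarrow> nat \<Rightarrow> bool) \<Rightarrow> nat set \<Rightarrow> bool" where
  "is_stable E S \<longleftrightarrow> (\<forall>x\<in>S. \<forall>y\<in>S. \<not> E x y)"

end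

theory Submission
  imports Defs
begin
definition sym_irrefl :: "('a \<Rightarrow> 'a \<Rightarrow> bool) \<Rightarrow> bool" where
  "sym_irrefl E \<longleftrightarrow> (\<forall>x y. E x y \<longrightarrow> E y x) \<and> (\<forall>x. \<not> E x x)"

definition compl_adj :: "('a \<Rightarrow> 'a \<Rightarrow> bool) \<Rightarrow> 'a \<Rightarrow> 'a \<Rightarrow> bool" where
  "compl_adj E x y \<longleftrightarrow> x \<noteq> y \<and> \<not> E x y"

definition nbr_count :: "('a \<Rightarrow> 'a \<Rightarrow> bool) \<Rightarrow> 'a \<Rightarrow> 'a set \<Rightarrow> nat" where
  "nbr_count E v S = card {u\<in>S. E v u}"

text \<open>Counts ordered pairs: \<open>edge_count E A A\<close> is twice the number of edges inside \<open>A\<close>.\<close>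
definition edge_count :: "('a \<Rightarrow> 'a \<Rightarrow> bool) \<Rightarrow> 'a set \<Rightarrow> 'a set \<Rightarrow> nat" where
  "edge_count E A B = (\<Sum>a\<in>A. nbr_count E a B)"

definition anticomplete :: "('a \<Rightarrow> 'a \<Rightarrow> bool) \<Rightarrow> 'a set \<Rightarrow> 'a set \<Rightarrow> bool" where
  "anticomplete E X Y \<longleftrightarrow> (\<forall>x\<in>X. \<forall>y\<in>Y. \<not> E x y)"

lemma sym_irrefl_compl_adj: "sym_irrefl E \<Longrightarrow> sym_irrefl (compl_adj E)"
  unfolding sym_irrefl_def compl_adj_def by blast

lemma nbr_count_le_card: "finite S \<Longrightarrow> nbr_count E v S \<le> card S"
  unfolding nbr_count_def by (intro card_mono) auto

lemma nbr_count_mono: "finite T \<Longrightarrow> S \<subseteq> T \<Longrightarrow> nbr_count E v S \<le> nbr_count E v T"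
  unfolding nbr_count_def by (intro card_mono) auto

lemma nbr_count_Un:
  "finite A \<Longrightarrow> finite B \<Longrightarrow> A \<inter> B = {} \<Longrightarrow> nbr_count E v (A \<union> B) = nbr_count E v A + nbr_count E v B"
  unfolding nbr_count_def by (subst card_Un_disjoint[symmetric]) (auto intro: arg_cong[where f=card])

lemma edge_count_commute:
  assumes "sym_irrefl E" "finite A" "finite B"
  shows "edge_count E A B = edge_count E B A"
proof -
  have "edge_count E A B = (\<Sum>a\<in>A. \<Sum>b\<in>B. if E a b then 1 else 0)"
    unfolding edge_count_def nbr_count_def using assms by (simp add: sum.If_cases Int_def)
  also have "\<dots> = (\<Sum>b\<in>B. \<Sum>a\<in>A. if E b a then 1 else 0)"
    using assms(1) unfolding sym_irrefl_def by (subst sum.swap) (intro sum.cong refl, metis)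
  also have "\<dots> = edge_count E B A"
    unfolding edge_count_def nbr_count_def using assms by (simp add: sum.If_cases Int_def)
  finally show ?thesis .
qed

lemma edge_count_Un_left:
  "finite A \<Longrightarrow> finite B \<Longrightarrow> A \<inter> B = {} \<Longrightarrow> edge_count E (A \<union> B) C = edge_count E A C + edge_count E B C"
  unfolding edge_count_def by (simp add: sum.union_disjoint)

lemma edge_count_Un_right:
  "finite B \<Longrightarrow> finite C \<Longrightarrow> B \<inter> C = {} \<Longrightarrow> edge_count E A (B \<union> C) = edge_count E A B + edge_count E A C"
  unfolding edge_count_def by (simp add: nbr_count_Un sum.distrib)

lemma edge_count_le_card: "finite B \<Longrightarrow> edge_count E A B \<le> card A * card B"
  using sum_mono[of A "\<lambda>a. nbr_count E a B" "\<lambda>_. card B"] nbr_count_le_card[of B E]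
  unfolding edge_count_def by simp

lemma edge_count_mono_right: "finite B \<Longrightarrow> B' \<subseteq> B \<Longrightarrow> edge_count E A B' \<le> edge_count E A B"
  unfolding edge_count_def by (intro sum_mono nbr_count_mono)

lemma edge_count_le_if_nbr_count_le:
  fixes d :: real
  shows "(\<And>a. a \<in> A \<Longrightarrow> real (nbr_count E a B) \<le> d) \<Longrightarrow> real (edge_count E A B) \<le> card A * d"
  unfolding edge_count_def using sum_mono[of A "\<lambda>a. real (nbr_count E a B)" "\<lambda>_. d"] by simp

lemma contains_induced_mono:
  assumes "contains_induced U E k H" "U \<subseteq> V"
  shows "contains_induced V E k H"
  using assms unfolding contains_induced_def by (meson order_trans)

lemma not_contains_induced_mono:
  "\<not> contains_induced V E k H \<Longrightarrow> U \<subseteq> V \<Longrightarrow> \<not> contains_induced U E k H"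
  using contains_induced_mono by blast

lemma contains_induced_compl_path:
  "contains_induced V (compl_adj E) k path_adj \<longleftrightarrow> contains_induced V E k copath_adj"
  unfolding contains_induced_def
proof (intro iff_exI conj_cong refl)
  fix f :: "nat \<Rightarrow> nat" assume "inj_on f {0..<k}"
  then have "\<And>i j. i < k \<Longrightarrow> j < k \<Longrightarrow> i \<noteq> j \<Longrightarrow> f i \<noteq> f j"
    by (simp add: inj_on_eq_iff)
  then show "(\<forall>i<k. \<forall>j<k. i \<noteq> j \<longrightarrow> compl_adj E (f i) (f j) = path_adj i j) =
        (\<forall>i<k. \<forall>j<k. i \<noteq> j \<longrightarrow> E (f i) (f j) = copath_adj i j)"
    unfolding compl_adj_def copath_adj_def by simp blast
qed

definition induced_path :: "('a \<Rightarrow> 'a \<Rightarrow> bool) \<Rightarrow> (nat \<Rightarrow> 'a) \<Rightarrow> nat \<Rightarrow> bool" where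
  "induced_path E f i \<longleftrightarrow> inj_on f {0..<i} \<and> (\<forall>a<i. \<forall>b<i. a \<noteq> b \<longrightarrow> (E (f a) (f b) \<longleftrightarrow> path_adj a b))"

lemma contains_induced_pathI:
  "induced_path E f k \<Longrightarrow> f ` {0..<k} \<subseteq> V \<Longrightarrow> contains_induced V E k path_adj"
  unfolding induced_path_def contains_induced_def by blast

lemma image_fun_upd_lessThan_Suc: "(f(i := v)) ` {0..<Suc i} = insert v (f ` {0..<i})"
  by (auto simp: image_def less_Suc_eq)

lemma induced_path_snoc:
  assumes E: "sym_irrefl E" and f: "induced_path E f i" and v: "v \<notin> f ` {0..<i}"
    and last: "\<And>j. j < i \<Longrightarrow> E v (f j) \<longleftrightarrow> j + 1 = i"
  shows "induced_path E (f(i := v)) (Suc i)"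
  unfolding induced_path_def
proof (intro conjI allI impI)
  have "inj_on (f(i := v)) {0..<i}" using f unfolding induced_path_def inj_on_def by auto
  moreover have "v \<notin> (f(i := v)) ` {0..<i}" using v by auto
  ultimately show "inj_on (f(i := v)) {0..<Suc i}" by (simp add: atLeast0_lessThan_Suc)
next
  fix a b assume ab: "a < Suc i" "b < Suc i" "a \<noteq> b"
  have last': "E (f j) v \<longleftrightarrow> j + 1 = i" if "j < i" for j
    using last[OF that] E unfolding sym_irrefl_def by blast
  consider "a = i" "b < i" | "b = i" "a < i" | "a < i" "b < i" using ab by linarith
  then show "E ((f(i := v)) a) ((f(i := v)) b) \<longleftrightarrow> path_adj a b"
  proof cases
    case 1 then show ?thesis using last unfolding path_adj_def by auto
  next
    case 2 then show ?thesis using last' unfolding path_adj_def by auto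
  next
    case 3 then show ?thesis using f ab(3) unfolding induced_path_def by auto
  qed
qed

lemma sum_remove_max_le_average:
  fixes g :: "'a \<Rightarrow> nat"
  assumes "finite X" "x \<in> X" "\<forall>y\<in>X. g y \<le> g x"
  shows "sum g (X - {x}) * card X \<le> sum g X * card (X - {x})"
proof -
  have "card X > 0" using assms by (auto simp: card_gt_0_iff)
  then have X: "card X = card (X - {x}) + 1" "sum g X = sum g (X - {x}) + g x"
    using assms by (auto simp: sum.remove)
  have "sum g (X - {x}) \<le> g x * card (X - {x})"
    using sum_mono[of "X - {x}" g "\<lambda>_. g x"] assms(3) by (simp add: mult.commute)
  then have "sum g (X - {x}) * card (X - {x}) + sum g (X - {x})
      \<le> sum g (X - {x}) * card (X - {x}) + g x * card (X - {x})" by (rule add_left_mono)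
  then show ?thesis unfolding X by (simp add: distrib_left distrib_right)
qed

lemma subset_sum_le_average:
  fixes g :: "'a \<Rightarrow> nat"
  assumes "finite X" "m \<le> card X"
  shows "\<exists>Y\<subseteq>X. card Y = m \<and> sum g Y * card X \<le> sum g X * m"
  using assms
proof (induction "card X - m" arbitrary: X)
  case 0
  then show ?case by (intro exI[of _ X]) auto
next
  case (Suc d)
  then have "X \<noteq> {}" by auto
  then have "Max (g ` X) \<in> g ` X" using Suc.prems(1) by simp
  then obtain x where x: "x \<in> X" "g x = Max (g ` X)" by (metis imageE)
  then have x_max: "\<forall>y\<in>X. g y \<le> g x" using Suc.prems(1) by simp
  let ?X = "X - {x}"
  have card_X: "card ?X = card X - 1" using x Suc.prems by simp
  then have "d = card ?X - m" "m \<le> card ?X" using Suc.hyps(2) by linarith+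
  then obtain Y where Y: "Y \<subseteq> ?X" "card Y = m" "sum g Y * card ?X \<le> sum g ?X * m"
    using Suc.hyps(1)[of ?X] Suc.prems(1) by blast
  have "sum g Y * card X * card ?X \<le> sum g ?X * card X * m"
    using mult_le_mono1[OF Y(3), of "card X"] by (simp add: algebra_simps)
  also have "\<dots> \<le> sum g X * card ?X * m"
    using sum_remove_max_le_average[OF Suc.prems(1) x(1) x_max] by simp
  finally have "sum g Y * card X * card ?X \<le> sum g X * m * card ?X" by (simp add: algebra_simps)
  show ?case
  proof (cases "m = 0")
    case True
    then show ?thesis by (intro exI[of _ "{}"]) auto
  next
    case False
    with \<open>m \<le> card ?X\<close> have "card ?X > 0" by linarith
    with \<open>sum g Y * card X * card ?X \<le> sum g X * m * card ?X\<close> Y show ?thesis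
      by (intro exI[of _ Y]) auto
  qed
qed

lemma edge_count_subset_le_average:
  assumes "finite A" "m \<le> card A"
  shows "\<exists>A'\<subseteq>A. card A' = m \<and> real (edge_count E A' B) * card A \<le> real (edge_count E A B) * m"
  using subset_sum_le_average[OF assms, of "\<lambda>a. nbr_count E a B"]
  unfolding edge_count_def by (metis of_nat_le_iff of_nat_mult)

lemma equal_size_sparse_pair:
  fixes \<epsilon> :: real
  assumes E: "sym_irrefl E" and fin: "finite A" "finite B" and ne: "A \<noteq> {}" "B \<noteq> {}"
    and sparse: "real (edge_count E A B) \<le> \<epsilon> * card A * card B" and m: "m \<le> card A" "m \<le> card B"
  shows "\<exists>A'\<subseteq>A. \<exists>B'\<subseteq>B. card A' = m \<and> card B' = m \<and> real (edge_count E A' B') \<le> \<epsilon> * m * m"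
proof -
  have pos: "card A > 0" "card B > 0" using fin ne by auto
  obtain A' where A': "A' \<subseteq> A" "card A' = m" "real (edge_count E A' B) * card A \<le> real (edge_count E A B) * m"
    using edge_count_subset_le_average[OF fin(1) m(1)] by blast
  have "real (edge_count E A' B) * card A \<le> \<epsilon> * card B * m * card A"
    using A'(3) mult_right_mono[OF sparse, of m] by (simp add: algebra_simps)
  then have A'B: "real (edge_count E B A') \<le> \<epsilon> * m * card B"
    using pos edge_count_commute[OF E fin(2) finite_subset[OF A'(1) fin(1)]] by (simp add: algebra_simps)
  obtain B' where B': "B' \<subseteq> B" "card B' = m" "real (edge_count E B' A') * card B \<le> real (edge_count E B A') * m"
    using edge_count_subset_le_average[OF fin(2) m(2)] by blast
  moreover have "edge_count E B' A' = edge_count E A' B'"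
    using edge_count_commute[OF E finite_subset[OF B'(1) fin(2)] finite_subset[OF A'(1) fin(1)]] .
  ultimately have "real (edge_count E A' B') * card B \<le> \<epsilon> * m * m * card B"
    using mult_right_mono[OF A'B, of m] by (simp add: algebra_simps)
  then have "real (edge_count E A' B') \<le> \<epsilon> * m * m"
    by (rule mult_right_le_imp_le) (use pos in simp)
  with A'(1,2) B'(1,2) show ?thesis by blast
qed

definition sparse_or_dense_pair :: "('a \<Rightarrow> 'a \<Rightarrow> bool) \<Rightarrow> 'a set \<Rightarrow> real \<Rightarrow> real \<Rightarrow> bool" where
  "sparse_or_dense_pair E U \<epsilon> \<delta> \<longleftrightarrow> (\<exists>A B. A \<subseteq> U \<and> B \<subseteq> U \<and> A \<inter> B = {} \<and>
      \<delta> * card U \<le> card A \<and> \<delta> * card U \<le> card B \<and>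
      (real (edge_count E A B) \<le> \<epsilon> * card A * card B \<or>
       real (edge_count (compl_adj E) A B) \<le> \<epsilon> * card A * card B))"

lemma two_sided_vertex_or_lopsided_half:
  fixes \<epsilon> :: real
  assumes "finite D"
  shows "(\<exists>v\<in>D. \<epsilon> * card R \<le> real (nbr_count E v R) \<and> \<epsilon> * card R \<le> real (nbr_count (compl_adj E) v R)) \<or>
         (\<exists>A\<subseteq>D. card D \<le> 2 * card A \<and>
            (real (edge_count E A R) \<le> \<epsilon> * card A * card R \<or>
             real (edge_count (compl_adj E) A R) \<le> \<epsilon> * card A * card R))"
proof (cases "\<exists>v\<in>D. \<epsilon> * card R \<le> real (nbr_count E v R) \<and> \<epsilon> * card R \<le> real (nbr_count (compl_adj E) v R)")
  case no_vertex: False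
  define A1 where "A1 = {v\<in>D. real (nbr_count E v R) < \<epsilon> * card R}"
  define A2 where "A2 = {v\<in>D. real (nbr_count (compl_adj E) v R) < \<epsilon> * card R}"
  have "D \<subseteq> A1 \<union> A2" using no_vertex unfolding A1_def A2_def by (auto simp: not_le)
  then have "card D \<le> card (A1 \<union> A2)" using assms unfolding A1_def A2_def by (intro card_mono) auto
  also have "\<dots> \<le> card A1 + card A2" by (rule card_Un_le)
  finally have "card D \<le> 2 * card A1 \<or> card D \<le> 2 * card A2" by linarith
  moreover have "real (edge_count E A1 R) \<le> card A1 * (\<epsilon> * card R)"
    by (rule edge_count_le_if_nbr_count_le) (simp add: A1_def)
  moreover have "real (edge_count (compl_adj E) A2 R) \<le> card A2 * (\<epsilon> * card R)"
    by (rule edge_count_le_if_nbr_count_le) (simp add: A2_def)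
  moreover have "A1 \<subseteq> D" "A2 \<subseteq> D" unfolding A1_def A2_def by auto
  ultimately show ?thesis by (metis mult.commute mult.left_commute)
qed simp

text \<open>An induced path with two reservoirs: the vertices of \<open>D\<close> see only the last path vertex, so
  any of them extends the path; those of \<open>R\<close> see none of it, so the neighbours and the
  non-neighbours of the new vertex in \<open>R\<close> are the next pair of reservoirs.\<close>
definition reservoir_path ::
    "('a \<Rightarrow> 'a \<Rightarrow> bool) \<Rightarrow> 'a set \<Rightarrow> real \<Rightarrow> nat \<Rightarrow> (nat \<Rightarrow> 'a) \<Rightarrow> 'a set \<Rightarrow> 'a set \<Rightarrow> bool" where
  "reservoir_path E U \<epsilon> i f D R \<longleftrightarrow> induced_path E f i \<and> f ` {0..<i} \<subseteq> U \<and>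
      D \<subseteq> U \<and> R \<subseteq> U \<and> D \<inter> R = {} \<and> D \<inter> f ` {0..<i} = {} \<and> R \<inter> f ` {0..<i} = {} \<and>
      (\<forall>d\<in>D. \<forall>j<i. E d (f j) \<longleftrightarrow> j + 1 = i) \<and> (\<forall>r\<in>R. \<forall>j<i. \<not> E r (f j)) \<and>
      \<epsilon> ^ i * card U / 3 \<le> card D \<and> \<epsilon> ^ i * card U / 3 \<le> card R"

lemma reservoir_path_0:
  assumes "finite U" "3 \<le> card U"
  shows "\<exists>D R. reservoir_path E U \<epsilon> 0 f D R"
proof -
  obtain D where D: "D \<subseteq> U" "card D = card U div 2"
    using obtain_subset_with_card_n[of "card U div 2" U] by auto
  then have "card (U - D) = card U - card U div 2"
    using assms(1) by (simp add: card_Diff_subset finite_subset)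
  moreover have "real (card U) / 3 \<le> card U div 2" "real (card U) / 3 \<le> card U - card U div 2"
    using assms(2) by linarith+
  ultimately have "reservoir_path E U \<epsilon> 0 f D (U - D)"
    using D unfolding reservoir_path_def induced_path_def by auto
  then show ?thesis by blast
qed

lemma reservoir_path_Suc:
  assumes E: "sym_irrefl E" and \<epsilon>: "0 \<le> \<epsilon>" and P: "reservoir_path E U \<epsilon> i f D R" and v: "v \<in> D"
    and nbrs: "\<epsilon> * card R \<le> real (nbr_count E v R)"
    and non_nbrs: "\<epsilon> * card R \<le> real (nbr_count (compl_adj E) v R)"
  shows "reservoir_path E U \<epsilon> (Suc i) (f(i := v)) {u\<in>R. E v u} {u\<in>R. compl_adj E v u}"
proof -
  have path: "induced_path E f i" "f ` {0..<i} \<subseteq> U"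
    and sets: "D \<subseteq> U" "R \<subseteq> U" "D \<inter> R = {}" "D \<inter> f ` {0..<i} = {}" "R \<inter> f ` {0..<i} = {}"
    and D: "\<forall>d\<in>D. \<forall>j<i. E d (f j) \<longleftrightarrow> j + 1 = i" and R: "\<forall>r\<in>R. \<forall>j<i. \<not> E r (f j)"
    and card_R: "\<epsilon> ^ i * card U / 3 \<le> card R"
    using P unfolding reservoir_path_def by auto
  have sym: "E x y \<Longrightarrow> E y x" for x y using E unfolding sym_irrefl_def by blast
  have "\<epsilon> ^ Suc i * card U / 3 \<le> \<epsilon> * card R"
    using mult_left_mono[OF card_R \<epsilon>] by simp
  then have "\<epsilon> ^ Suc i * card U / 3 \<le> card {u\<in>R. E v u}"
    "\<epsilon> ^ Suc i * card U / 3 \<le> card {u\<in>R. compl_adj E v u}"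
    using nbrs non_nbrs unfolding nbr_count_def by linarith+
  moreover have "induced_path E (f(i := v)) (Suc i)"
    using induced_path_snoc[OF E path(1)] v sets(4) D by blast
  moreover have "\<forall>d\<in>{u\<in>R. E v u}. \<forall>j<Suc i. E d ((f(i := v)) j) \<longleftrightarrow> j + 1 = Suc i"
    using R sym by (auto simp: less_Suc_eq)
  moreover have "\<forall>r\<in>{u\<in>R. compl_adj E v u}. \<forall>j<Suc i. \<not> E r ((f(i := v)) j)"
    using R sym by (auto simp: less_Suc_eq compl_adj_def)
  moreover have "insert v (f ` {0..<i}) \<subseteq> U" using path(2) sets(1) v by blast
  moreover have "{u\<in>R. E v u} \<subseteq> U" "{u\<in>R. compl_adj E v u} \<subseteq> U" using sets(2) by auto
  moreover have "{u\<in>R. E v u} \<inter> {u\<in>R. compl_adj E v u} = {}" by (auto simp: compl_adj_def)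
  moreover have "v \<notin> R" using v sets(3) by blast
  then have "{u\<in>R. E v u} \<inter> insert v (f ` {0..<i}) = {}"
    "{u\<in>R. compl_adj E v u} \<inter> insert v (f ` {0..<i}) = {}"
    using sets(5) by auto
  ultimately show ?thesis unfolding reservoir_path_def image_fun_upd_lessThan_Suc by blast
qed

lemma reservoir_path_step:
  assumes E: "sym_irrefl E" and U: "finite U" and \<epsilon>: "0 < \<epsilon>" "\<epsilon> \<le> 1" and "i < k"
    and P: "reservoir_path E U \<epsilon> i f D R"
  shows "(\<exists>f' D' R'. reservoir_path E U \<epsilon> (Suc i) f' D' R') \<or> sparse_or_dense_pair E U \<epsilon> (\<epsilon> ^ k / 6)"
proof -
  have sets: "D \<subseteq> U" "R \<subseteq> U" "D \<inter> R = {}" and card_D: "\<epsilon> ^ i * card U / 3 \<le> card D"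
    and card_R: "\<epsilon> ^ i * card U / 3 \<le> card R"
    using P unfolding reservoir_path_def by auto
  have "\<epsilon> ^ k \<le> \<epsilon> ^ i" using \<epsilon> \<open>i < k\<close> by (intro power_decreasing) auto
  then have shrink: "\<epsilon> ^ k / 6 * card U \<le> \<epsilon> ^ i * card U / 6"
    by (simp add: mult_right_mono divide_right_mono)
  from two_sided_vertex_or_lopsided_half[OF finite_subset[OF sets(1) U], of \<epsilon> R E]
  show ?thesis
  proof
    assume "\<exists>v\<in>D. \<epsilon> * card R \<le> real (nbr_count E v R) \<and> \<epsilon> * card R \<le> real (nbr_count (compl_adj E) v R)"
    then obtain v where "v \<in> D" "\<epsilon> * card R \<le> real (nbr_count E v R)"
      "\<epsilon> * card R \<le> real (nbr_count (compl_adj E) v R)" by blast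
    then have "reservoir_path E U \<epsilon> (Suc i) (f(i := v)) {u\<in>R. E v u} {u\<in>R. compl_adj E v u}"
      using reservoir_path_Suc[OF E _ P] \<epsilon> by simp
    then show ?thesis by blast
  next
    assume "\<exists>A\<subseteq>D. card D \<le> 2 * card A \<and>
        (real (edge_count E A R) \<le> \<epsilon> * card A * card R \<or>
         real (edge_count (compl_adj E) A R) \<le> \<epsilon> * card A * card R)"
    then obtain A where A: "A \<subseteq> D" "card D \<le> 2 * card A"
      "real (edge_count E A R) \<le> \<epsilon> * card A * card R \<or>
       real (edge_count (compl_adj E) A R) \<le> \<epsilon> * card A * card R"
      by blast
    have "\<epsilon> ^ i * card U / 6 \<le> card A" using A(2) card_D by linarith
    moreover have "0 \<le> \<epsilon> ^ i * card U" using \<epsilon> by simp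
    then have "\<epsilon> ^ i * card U / 6 \<le> card R" using card_R by linarith
    ultimately have "sparse_or_dense_pair E U \<epsilon> (\<epsilon> ^ k / 6)"
      unfolding sparse_or_dense_pair_def using A sets shrink
      by (intro exI[of _ A] exI[of _ R]) auto
    then show ?thesis ..
  qed
qed

lemma path_free_sparse_or_dense_pair:
  assumes E: "sym_irrefl E" and U: "finite U" "3 \<le> card U" and \<epsilon>: "0 < \<epsilon>" "\<epsilon> \<le> 1"
    and no_path: "\<not> contains_induced U E k path_adj"
  shows "sparse_or_dense_pair E U \<epsilon> (\<epsilon> ^ k / 6)"
proof (rule ccontr)
  assume no_pair: "\<not> ?thesis"
  have "\<exists>f D R. reservoir_path E U \<epsilon> i f D R" if "i \<le> k" for i
    using that
  proof (induction i)
    case 0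
    then show ?case using reservoir_path_0[OF U] by blast
  next
    case (Suc i)
    then obtain f D R where "reservoir_path E U \<epsilon> i f D R" by (meson Suc_leD)
    with reservoir_path_step[OF E U(1) \<epsilon>] Suc.prems no_pair show ?case by (meson Suc_le_lessD)
  qed
  then obtain f D R where "reservoir_path E U \<epsilon> k f D R" by blast
  then have "induced_path E f k" "f ` {0..<k} \<subseteq> U" unfolding reservoir_path_def by auto
  with no_path show False by (blast intro: contains_induced_pathI)
qed

text \<open>A \<open>(p, \<eta>)\<close>-sparse set has edge density at most about \<open>1 / p + \<eta>\<close>. The natural number \<open>s\<close>
  stands for \<open>card T / p\<close>; keeping it integral lets the bound survive the rounding in
  \<open>sparse_set_Un\<close>.\<close>
definition sparse_set :: "('a \<Rightarrow> 'a \<Rightarrow> bool) \<Rightarrow> nat \<Rightarrow> real \<Rightarrow> 'a set \<Rightarrow> bool" where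
  "sparse_set E p \<eta> T \<longleftrightarrow>
     (\<exists>s::nat. p * s \<le> card T \<and> real (edge_count E T T) \<le> real s * card T + \<eta> * (card T)\<^sup>2)"

lemma sparse_set_trivial:
  assumes "finite T" "p \<le> 1" "0 \<le> \<eta>"
  shows "sparse_set E p \<eta> T"
  unfolding sparse_set_def
proof (intro exI[of _ "card T"] conjI)
  show "p * card T \<le> card T" using assms(2) by (cases p) auto
  have "real (edge_count E T T) \<le> real (card T) * card T"
    using edge_count_le_card[OF assms(1), of E T] by (metis of_nat_le_iff of_nat_mult)
  then show "real (edge_count E T T) \<le> real (card T) * card T + \<eta> * (card T)\<^sup>2"
    using assms(3) by (simp add: add_increasing2)
qed

lemma sparse_set_singleton:
  assumes "sym_irrefl E" "0 \<le> \<eta>"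
  shows "sparse_set E p \<eta> {u}"
proof -
  have "edge_count E {u} {u} = 0"
    using assms(1) unfolding sym_irrefl_def edge_count_def nbr_count_def by simp
  then show ?thesis unfolding sparse_set_def using assms(2) by (intro exI[of _ 0]) auto
qed

lemma sparse_set_edge_count:
  assumes "sparse_set E r \<eta> T" "0 < r"
  shows "real (edge_count E T T) \<le> (1 / r + \<eta>) * (card T)\<^sup>2"
proof -
  obtain s :: nat where s: "r * s \<le> card T"
    "real (edge_count E T T) \<le> real s * card T + \<eta> * (card T)\<^sup>2"
    using assms(1) unfolding sparse_set_def by blast
  have "real r * real s \<le> real (card T)" using s(1) by (metis of_nat_le_iff of_nat_mult)
  then have "real s \<le> real (card T) / r" using assms(2) by (simp add: field_simps mult.commute)
  then have "real s * card T \<le> real (card T) / r * card T" by (intro mult_right_mono) auto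
  then show ?thesis using s(2) by (simp add: power2_eq_square algebra_simps)
qed

lemma sparse_set_Un:
  assumes E: "sym_irrefl E" and fin: "finite A" "finite T" and disj: "A \<inter> T = {}"
    and T: "sparse_set E (p - 1) \<eta> T" and p: "2 \<le> p" and A: "card A = card T div (p - 1)"
    and cross: "real (edge_count E A T) \<le> \<eta> * card T * card A" and \<eta>: "0 \<le> \<eta>"
  shows "sparse_set E p \<eta> (A \<union> T)"
proof -
  define a t where "a = card A" and "t = card T"
  obtain s :: nat where s: "(p - 1) * s \<le> t" "real (edge_count E T T) \<le> real s * t + \<eta> * t\<^sup>2"
    using T unfolding sparse_set_def t_def by blast
  have "s \<le> a" using s(1) p unfolding A a_def t_def
    by (subst less_eq_div_iff_mult_less_eq) (auto simp: mult.commute)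
  have "(p - 1) * a \<le> t" unfolding a_def A t_def by (metis div_times_less_eq_dividend mult.commute)
  then have card_Un: "p * a \<le> card (A \<union> T)"
    using p fin disj unfolding a_def t_def by (cases p) (auto simp: card_Un_disjoint)
  have "edge_count E (A \<union> T) (A \<union> T) =
      edge_count E A A + edge_count E A T + (edge_count E T A + edge_count E T T)"
    using fin disj by (simp add: edge_count_Un_left edge_count_Un_right)
  also have "edge_count E T A = edge_count E A T" using edge_count_commute[OF E fin(2,1)] .
  finally have "real (edge_count E (A \<union> T) (A \<union> T)) =
      real (edge_count E A A) + 2 * real (edge_count E A T) + real (edge_count E T T)" by simp
  also have "\<dots> \<le> real a * a + 2 * (\<eta> * t * a) + (s * t + \<eta> * t\<^sup>2)"
    using edge_count_le_card[OF fin(1), of E A] cross s(2) unfolding a_def t_def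
    by (intro add_mono) (auto simp flip: of_nat_mult)
  also have "\<dots> \<le> real a * (a + t) + \<eta> * (real a + t)\<^sup>2"
  proof -
    have "real s * t \<le> real a * t" using \<open>s \<le> a\<close> by (intro mult_right_mono) auto
    moreover have "0 \<le> \<eta> * (real a * a)" using \<eta> by simp
    ultimately show ?thesis by (simp add: power2_eq_square algebra_simps)
  qed
  finally have "real (edge_count E (A \<union> T) (A \<union> T)) \<le> real a * card (A \<union> T) + \<eta> * (card (A \<union> T))\<^sup>2"
    using fin disj unfolding a_def t_def by (simp add: card_Un_disjoint)
  with card_Un show ?thesis unfolding sparse_set_def by blast
qed

lemma sparse_set_extend:
  fixes \<eta> \<mu> :: real
  assumes E: "sym_irrefl E" and fin: "finite A" "finite B" and disj: "A \<inter> B = {}"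
    and card: "card A = m" "card B = m" "0 < m"
    and sparse: "real (edge_count E A B) \<le> \<eta> * \<mu> * m * m"
    and T: "T \<subseteq> B" "\<mu> * m \<le> card T" "sparse_set E (p - 1) \<eta> T" and p: "2 \<le> p" and \<eta>: "0 \<le> \<eta>"
  shows "\<exists>T'\<subseteq>A \<union> B. card T \<le> card T' \<and> sparse_set E p \<eta> T'"
proof -
  define a where "a = card T div (p - 1)"
  have fin_T: "finite T" using T(1) fin(2) finite_subset by blast
  have "card T \<le> m" using card_mono[OF fin(2) T(1)] card(2) by simp
  then have "a \<le> card A" unfolding a_def card(1) by (meson div_le_dividend order_trans)
  then obtain A' where A': "A' \<subseteq> A" "card A' = a"
      "real (edge_count E A' T) * card A \<le> real (edge_count E A T) * a"
    using edge_count_subset_le_average[OF fin(1), of a E T] by blast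
  have "real (edge_count E A' T) * m \<le> real (edge_count E A T) * a" using A'(3) card(1) by simp
  also have "\<dots> \<le> real (edge_count E A B) * a"
    using edge_count_mono_right[OF fin(2) T(1), of E A] by (intro mult_right_mono) auto
  also have "\<dots> \<le> \<eta> * (\<mu> * m) * a * m"
    using mult_right_mono[OF sparse, of a] by (simp add: mult_ac)
  also have "\<dots> \<le> \<eta> * card T * a * m"
    using mult_left_mono[OF T(2) \<eta>] by (intro mult_right_mono) auto
  finally have "real (edge_count E A' T) * m \<le> \<eta> * card T * card A' * m" using A'(2) by simp
  then have "real (edge_count E A' T) \<le> \<eta> * card T * card A'"
    by (rule mult_right_le_imp_le) (use card(3) in simp)
  moreover have "A' \<inter> T = {}" using A'(1) T(1) disj by blast
  ultimately have "sparse_set E p \<eta> (A' \<union> T)"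
    using sparse_set_Un[OF E finite_subset[OF A'(1) fin(1)] fin_T _ T(3) p] A'(2) \<eta>
    unfolding a_def by blast
  moreover have "card T \<le> card (A' \<union> T)"
    using fin_T finite_subset[OF A'(1) fin(1)] by (simp add: card_mono)
  moreover have "A' \<union> T \<subseteq> A \<union> B" using A'(1) T(1) by blast
  ultimately show ?thesis by (intro exI[of _ "A' \<union> T"]) simp
qed

definition rodl_constant :: "nat \<Rightarrow> nat \<Rightarrow> nat \<Rightarrow> real \<Rightarrow> real \<Rightarrow> bool" where
  "rodl_constant k p q \<eta> \<mu> \<longleftrightarrow> 0 < \<mu> \<and>
     (\<forall>E U. sym_irrefl E \<and> finite U \<and> \<not> contains_induced U E k path_adj \<longrightarrow>
        (\<exists>T\<subseteq>U. \<mu> * card U \<le> card T \<and> (sparse_set E p \<eta> T \<or> sparse_set (compl_adj E) q \<eta> T)))"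

lemma rodl_constantD:
  assumes "rodl_constant k p q \<eta> \<mu>" "sym_irrefl E" "finite U" "\<not> contains_induced U E k path_adj"
  shows "\<exists>T\<subseteq>U. \<mu> * card U \<le> card T \<and> (sparse_set E p \<eta> T \<or> sparse_set (compl_adj E) q \<eta> T)"
  using assms unfolding rodl_constant_def by blast

lemma rodl_constant_mono:
  assumes "rodl_constant k p q \<eta> \<mu>" "0 < \<mu>'" "\<mu>' \<le> \<mu>"
  shows "rodl_constant k p q \<eta> \<mu>'"
  unfolding rodl_constant_def
proof (intro conjI allI impI)
  fix E U assume "sym_irrefl E \<and> finite U \<and> \<not> contains_induced U E k path_adj"
  then obtain T where "T \<subseteq> U" "\<mu> * card U \<le> card T" "sparse_set E p \<eta> T \<or> sparse_set (compl_adj E) q \<eta> T"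
    using rodl_constantD[OF assms(1)] by blast
  moreover have "\<mu>' * card U \<le> \<mu> * card U" using assms(3) by (simp add: mult_right_mono)
  ultimately show "\<exists>T\<subseteq>U. \<mu>' * card U \<le> card T \<and> (sparse_set E p \<eta> T \<or> sparse_set (compl_adj E) q \<eta> T)"
    by (meson order_trans)
qed (use assms(2) in simp)

lemma rodl_constant_trivial:
  assumes "p \<le> 1 \<or> q \<le> 1" "0 \<le> \<eta>"
  shows "rodl_constant k p q \<eta> 1"
  unfolding rodl_constant_def
proof (intro conjI allI impI)
  fix E U assume "sym_irrefl E \<and> finite U \<and> \<not> contains_induced U E k path_adj"
  then have "sparse_set E p \<eta> U \<or> sparse_set (compl_adj E) q \<eta> U"
    using assms sparse_set_trivial by blast
  then show "\<exists>T\<subseteq>U. (1::real) * card U \<le> card T \<and> (sparse_set E p \<eta> T \<or> sparse_set (compl_adj E) q \<eta> T)"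
    by auto
qed simp

lemma sparse_set_small:
  fixes \<mu> \<eta> :: real
  assumes "sym_irrefl E" "finite U" "card U < 3" "\<mu> \<le> 1 / 3" "0 \<le> \<eta>"
  shows "\<exists>T\<subseteq>U. \<mu> * card U \<le> card T \<and> (sparse_set E p \<eta> T \<or> sparse_set (compl_adj E) q \<eta> T)"
proof (cases "U = {}")
  case True
  moreover have "sparse_set E p \<eta> {}" unfolding sparse_set_def edge_count_def by simp
  ultimately show ?thesis by auto
next
  case False
  then obtain u where u: "u \<in> U" by auto
  have "\<mu> * card U \<le> card {u}"
  proof (cases "\<mu> \<le> 0")
    case False
    then have "\<mu> * card U \<le> \<mu> * 3" using assms(3) by (intro mult_left_mono) auto
    then show ?thesis using assms(4) by simp
  qed (use mult_nonpos_nonneg[of \<mu> "real (card U)"] in simp)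
  with u sparse_set_singleton[OF assms(1,5)] show ?thesis by blast
qed

text \<open>Inside a sparse pair \<open>(A, B)\<close> a \<open>(p - 1)\<close>-sparse set in \<open>B\<close> is enlarged by a part of \<open>A\<close> to a
  \<open>p\<close>-sparse set.\<close>
lemma sparse_pair_sparse_set:
  fixes \<eta> \<mu> \<delta> :: real
  assumes E: "sym_irrefl E" and U: "finite U" "A \<subseteq> U" "B \<subseteq> U" "A \<inter> B = {}"
    and card: "\<delta> * card U \<le> card A" "\<delta> * card U \<le> card B" "0 < \<delta> * card U"
    and sparse: "real (edge_count E A B) \<le> \<eta> * \<mu> * card A * card B"
    and p: "2 \<le> p" and \<eta>: "0 \<le> \<eta>" and \<mu>: "0 \<le> \<mu>"
    and hereditary: "\<And>U'. U' \<subseteq> U \<Longrightarrow>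
       \<exists>T'\<subseteq>U'. \<mu> * card U' \<le> card T' \<and> (sparse_set E (p - 1) \<eta> T' \<or> Q T')"
  shows "\<exists>T\<subseteq>U. \<mu> * \<delta> * card U \<le> card T \<and> (sparse_set E p \<eta> T \<or> Q T)"
proof -
  define m where "m = min (card A) (card B)"
  have fin: "finite A" "finite B" using finite_subset[OF U(2,1)] finite_subset[OF U(3,1)] by auto
  have m: "\<delta> * card U \<le> m" unfolding m_def using card(1,2) by (simp add: min_def)
  then have "0 < m" using card(3) by linarith
  then obtain A' B' where AB': "A' \<subseteq> A" "B' \<subseteq> B" "card A' = m" "card B' = m"
      "real (edge_count E A' B') \<le> \<eta> * \<mu> * m * m"
    using equal_size_sparse_pair[OF E fin _ _ sparse, of m] \<open>0 < m\<close> unfolding m_def by force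
  obtain T' where T': "T' \<subseteq> B'" "\<mu> * card B' \<le> card T'" "sparse_set E (p - 1) \<eta> T' \<or> Q T'"
    using hereditary[of B'] AB'(2) U(3) by blast
  have "\<mu> * \<delta> * card U \<le> \<mu> * m" using mult_left_mono[OF m \<mu>] by (simp add: mult.assoc)
  then have bound: "\<mu> * \<delta> * card U \<le> card T'" using T'(2) AB'(4) by simp
  show ?thesis
  proof (cases "Q T'")
    case True
    moreover have "T' \<subseteq> U" using T'(1) AB'(2) U(3) by blast
    ultimately show ?thesis using bound by blast
  next
    case False
    have "A' \<inter> B' = {}" using AB'(1,2) U(4) by blast
    moreover have "\<mu> * m \<le> card T'" using T'(2) AB'(4) by simp
    ultimately obtain T where T: "T \<subseteq> A' \<union> B'" "card T' \<le> card T" "sparse_set E p \<eta> T"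
      using sparse_set_extend[OF E finite_subset[OF AB'(1) fin(1)] finite_subset[OF AB'(2) fin(2)]
          _ AB'(3,4) \<open>0 < m\<close> AB'(5) T'(1)] T'(3) False p \<eta> by blast
    moreover have "T \<subseteq> U" using T(1) AB'(1,2) U(2,3) by blast
    moreover have "\<mu> * \<delta> * card U \<le> card T" using bound T(2) by linarith
    ultimately show ?thesis by blast
  qed
qed

lemma rodl_constant_step:
  assumes IH: "rodl_constant k (p - 1) q \<eta> \<mu>" "rodl_constant k p (q - 1) \<eta> \<mu>"
    and pq: "2 \<le> p" "2 \<le> q" and \<eta>: "0 < \<eta>" "\<eta> \<le> 1" and \<mu>: "\<mu> \<le> 1"
  shows "rodl_constant k p q \<eta> (min (1 / 3) (\<mu> * (\<eta> * \<mu>) ^ k / 6))"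
  unfolding rodl_constant_def
proof (intro conjI allI impI)
  have "0 < \<mu>" using IH(1) unfolding rodl_constant_def by blast
  then have \<epsilon>: "0 < \<eta> * \<mu>" "\<eta> * \<mu> \<le> 1" using \<eta> \<mu> by (auto simp: mult_le_one)
  then show "0 < min (1 / 3) (\<mu> * (\<eta> * \<mu>) ^ k / 6)" using \<open>0 < \<mu>\<close> by simp
  define \<delta> where "\<delta> = (\<eta> * \<mu>) ^ k / 6"
  fix E U assume "sym_irrefl E \<and> finite U \<and> \<not> contains_induced U E k path_adj"
  then have E: "sym_irrefl E" and U: "finite U" and no_path: "\<not> contains_induced U E k path_adj"
    by auto
  show "\<exists>T\<subseteq>U. min (1 / 3) (\<mu> * (\<eta> * \<mu>) ^ k / 6) * card U \<le> card T \<and>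
      (sparse_set E p \<eta> T \<or> sparse_set (compl_adj E) q \<eta> T)"
  proof (cases "card U < 3")
    case True
    have "min (1 / 3) (\<mu> * (\<eta> * \<mu>) ^ k / 6) \<le> 1 / 3" by simp
    with sparse_set_small[OF E U True this] \<eta>(1) show ?thesis by simp
  next
    case False
    have hereditary: "\<not> contains_induced U' E k path_adj" if "U' \<subseteq> U" for U'
      using no_path contains_induced_mono that by blast
    have "sparse_or_dense_pair E U (\<eta> * \<mu>) \<delta>"
      using path_free_sparse_or_dense_pair[OF E U _ \<epsilon> no_path] False unfolding \<delta>_def by simp
    then obtain A B where AB: "A \<subseteq> U" "B \<subseteq> U" "A \<inter> B = {}" "\<delta> * card U \<le> card A" "\<delta> * card U \<le> card B"
      "real (edge_count E A B) \<le> \<eta> * \<mu> * card A * card B \<or>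
       real (edge_count (compl_adj E) A B) \<le> \<eta> * \<mu> * card A * card B"
      unfolding sparse_or_dense_pair_def by blast
    have pos: "0 < \<delta> * card U" using \<epsilon> False unfolding \<delta>_def by simp
    have nonneg: "0 \<le> \<eta>" "0 \<le> \<mu>" using \<eta>(1) \<open>0 < \<mu>\<close> by auto
    have "min (1 / 3) (\<mu> * (\<eta> * \<mu>) ^ k / 6) * card U \<le> \<mu> * \<delta> * card U"
      unfolding \<delta>_def by (intro mult_right_mono) auto
    moreover from AB(6) have "\<exists>T\<subseteq>U. \<mu> * \<delta> * card U \<le> card T \<and>
        (sparse_set E p \<eta> T \<or> sparse_set (compl_adj E) q \<eta> T)"
    proof
      assume sparse: "real (edge_count E A B) \<le> \<eta> * \<mu> * card A * card B"
      have "\<exists>T'\<subseteq>U'. \<mu> * card U' \<le> card T' \<and>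
          (sparse_set E (p - 1) \<eta> T' \<or> sparse_set (compl_adj E) q \<eta> T')" if "U' \<subseteq> U" for U'
        using rodl_constantD[OF IH(1) E finite_subset[OF that U] hereditary[OF that]] .
      from sparse_pair_sparse_set[OF E U AB(1-5) pos sparse pq(1) nonneg this] show ?thesis .
    next
      assume dense: "real (edge_count (compl_adj E) A B) \<le> \<eta> * \<mu> * card A * card B"
      have "\<exists>T'\<subseteq>U'. \<mu> * card U' \<le> card T' \<and>
          (sparse_set (compl_adj E) (q - 1) \<eta> T' \<or> sparse_set E p \<eta> T')" if "U' \<subseteq> U" for U'
        using rodl_constantD[OF IH(2) E finite_subset[OF that U] hereditary[OF that]] by blast
      from sparse_pair_sparse_set[OF sym_irrefl_compl_adj[OF E] U AB(1-5) pos dense pq(2) nonneg this]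
      show ?thesis by blast
    qed
    ultimately show ?thesis by (meson order_trans)
  qed
qed

lemma rodl_constant_exists:
  assumes "0 < \<eta>" "\<eta> \<le> 1"
  shows "\<exists>\<mu>. rodl_constant k p q \<eta> \<mu>"
proof (induction "p + q" arbitrary: p q rule: less_induct)
  case less
  show ?case
  proof (cases "p \<le> 1 \<or> q \<le> 1")
    case True
    with assms(1) have "rodl_constant k p q \<eta> 1" by (simp add: rodl_constant_trivial)
    then show ?thesis ..
  next
    case False
    then have pq: "2 \<le> p" "2 \<le> q" by auto
    then have "p - 1 + q < p + q" "p + (q - 1) < p + q" by auto
    then obtain \<mu>1 \<mu>2 where \<mu>12: "rodl_constant k (p - 1) q \<eta> \<mu>1" "rodl_constant k p (q - 1) \<eta> \<mu>2"
      using less by meson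
    define \<mu> where "\<mu> = min (min \<mu>1 \<mu>2) 1"
    have "0 < \<mu>" using \<mu>12 unfolding rodl_constant_def \<mu>_def by simp
    then have IH: "rodl_constant k (p - 1) q \<eta> \<mu>" "rodl_constant k p (q - 1) \<eta> \<mu>"
      using rodl_constant_mono[OF \<mu>12(1)] rodl_constant_mono[OF \<mu>12(2)] unfolding \<mu>_def by auto
    have "\<mu> \<le> 1" unfolding \<mu>_def by simp
    from rodl_constant_step[OF IH pq assms this] show ?thesis ..
  qed
qed

definition connected_set :: "('a \<Rightarrow> 'a \<Rightarrow> bool) \<Rightarrow> 'a set \<Rightarrow> bool" where
  "connected_set E C \<longleftrightarrow> (\<forall>Y. Y \<noteq> {} \<and> Y \<subset> C \<longrightarrow> (\<exists>x\<in>Y. \<exists>y\<in>C - Y. E x y))"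

definition separated_in :: "('a \<Rightarrow> 'a \<Rightarrow> bool) \<Rightarrow> 'a set \<Rightarrow> 'a set \<Rightarrow> bool" where
  "separated_in E M X \<longleftrightarrow> X \<subseteq> M \<and> anticomplete E X (M - X)"

definition no_anticomplete_pair :: "('a \<Rightarrow> 'a \<Rightarrow> bool) \<Rightarrow> 'a set \<Rightarrow> real \<Rightarrow> bool" where
  "no_anticomplete_pair E S t \<longleftrightarrow> (\<forall>X Y. X \<subseteq> S \<longrightarrow> Y \<subseteq> S \<longrightarrow> X \<inter> Y = {} \<longrightarrow>
     t \<le> card X \<longrightarrow> t \<le> card Y \<longrightarrow> \<not> anticomplete E X Y)"

lemma no_anticomplete_pair_subset:
  "no_anticomplete_pair E S t \<Longrightarrow> M \<subseteq> S \<Longrightarrow> no_anticomplete_pair E M t"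
  unfolding no_anticomplete_pair_def by (meson order_trans)

lemma connected_set_edge_out:
  assumes "connected_set E C" "M \<subseteq> C" "separated_in E M C'" "C' \<noteq> {}" "C' \<noteq> C"
  shows "\<exists>x\<in>C'. \<exists>y\<in>C - M. E x y"
proof -
  have "C' \<subset> C" using assms(2,3,5) unfolding separated_in_def by auto
  then obtain x y where "x \<in> C'" "y \<in> C - C'" "E x y"
    using assms(1,4) unfolding connected_set_def by blast
  moreover have "y \<notin> M" using calculation assms(3) unfolding separated_in_def anticomplete_def by blast
  ultimately show ?thesis by blast
qed

lemma separated_in_small_or_large:
  fixes t :: real
  assumes "finite M" "no_anticomplete_pair E M t" "separated_in E M X"
  shows "card X < t \<or> card M - t < card X"
proof (rule ccontr)
  assume "\<not> ?thesis"
  then have X: "t \<le> card X" "card X \<le> card M - t" by auto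
  have "X \<subseteq> M" using assms(3) unfolding separated_in_def by blast
  then have "card (M - X) = real (card M) - card X"
    using assms(1) by (simp add: card_Diff_subset finite_subset card_mono of_nat_diff)
  then have "t \<le> card (M - X)" using X(2) by linarith
  then show False
    using assms(2,3) X(1) unfolding no_anticomplete_pair_def separated_in_def by blast
qed

lemma separated_in_split:
  assumes E: "sym_irrefl E" and X: "separated_in E M X" and Y: "Y \<subseteq> X" "anticomplete E Y (X - Y)"
  shows "separated_in E M Y" "separated_in E M (X - Y)"
  using assms unfolding separated_in_def anticomplete_def sym_irrefl_def by blast+

text \<open>The component is found as a smallest large separated set: splitting it would produce two
  separated sets that are both small.\<close>
lemma giant_component:
  fixes t :: real
  assumes E: "sym_irrefl E" and M: "finite M" "3 * t \<le> card M" and t: "0 < t"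
    and no_pair: "no_anticomplete_pair E M t"
  shows "\<exists>C. C \<noteq> {} \<and> connected_set E C \<and> separated_in E M C \<and> card M - t < card C"
proof -
  define large where "large X \<longleftrightarrow> separated_in E M X \<and> card M - t < card X" for X
  have "large M" unfolding large_def separated_in_def anticomplete_def using t by auto
  then obtain X where X: "large X" and minimal: "\<And>Y. large Y \<Longrightarrow> card X \<le> card Y"
    using ex_has_least_nat[of large M card] by blast
  have sep: "separated_in E M X" and big: "card M - t < card X" using X unfolding large_def by auto
  have fin: "finite X" using sep M(1) unfolding separated_in_def by (blast intro: finite_subset)
  have "connected_set E X" unfolding connected_set_def
  proof (intro allI impI)
    fix Y assume Y: "Y \<noteq> {} \<and> Y \<subset> X"
    show "\<exists>x\<in>Y. \<exists>y\<in>X - Y. E x y"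
    proof (rule ccontr)
      assume "\<not> ?thesis"
      then have "anticomplete E Y (X - Y)" unfolding anticomplete_def by blast
      from separated_in_split[OF E sep _ this] Y
      have seps: "separated_in E M Y" "separated_in E M (X - Y)" by auto
      have "card Y < card X" "card (X - Y) < card X"
        using Y fin by (auto intro: psubset_card_mono)
      then have "\<not> large Y" "\<not> large (X - Y)" using minimal by (auto simp: not_le[symmetric])
      then have "card Y < t" "card (X - Y) < t"
        using separated_in_small_or_large[OF M(1) no_pair] seps unfolding large_def by auto
      moreover have "card (X - Y) = card X - card Y" "card Y \<le> card X"
        using Y fin by (auto simp: card_Diff_subset card_mono finite_subset)
      ultimately show False using big M(2) by linarith
    qed
  qed
  moreover have "X \<noteq> {}" using big M(2) t by auto
  ultimately show ?thesis using sep big by blast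
qed

text \<open>The last path vertex has a neighbour in the connected set \<open>C\<close>, which is anticomplete to the
  rest of the path; so the path can be extended into \<open>C\<close>.\<close>
definition component_path :: "('a \<Rightarrow> 'a \<Rightarrow> bool) \<Rightarrow> 'a set \<Rightarrow> nat \<Rightarrow> (nat \<Rightarrow> 'a) \<Rightarrow> 'a set \<Rightarrow> bool" where
  "component_path E S i f C \<longleftrightarrow> induced_path E f i \<and> f ` {0..<i} \<subseteq> S \<and> C \<subseteq> S \<and> C \<inter> f ` {0..<i} = {} \<and>
     (\<forall>c\<in>C. \<forall>j. j + 1 < i \<longrightarrow> \<not> E c (f j)) \<and> connected_set E C \<and> (\<exists>c\<in>C. E (f (i - 1)) c)"

lemma component_path_snoc:
  assumes E: "sym_irrefl E" and P: "component_path E S i f C" and i: "1 \<le> i"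
    and C': "C' \<subseteq> {c\<in>C. \<not> E (f (i - 1)) c}" "connected_set E C'"
    and y: "y \<in> C" "E (f (i - 1)) y" "y \<notin> C'" and x: "x \<in> C'" "E x y"
  shows "component_path E S (Suc i) (f(i := y)) C'"
proof -
  have path: "induced_path E f i" "f ` {0..<i} \<subseteq> S" and C: "C \<subseteq> S" "C \<inter> f ` {0..<i} = {}"
    and far: "\<forall>c\<in>C. \<forall>j. j + 1 < i \<longrightarrow> \<not> E c (f j)"
    using P unfolding component_path_def by auto
  have sym: "E a b \<Longrightarrow> E b a" for a b using E unfolding sym_irrefl_def by blast
  have "E y (f j) \<longleftrightarrow> j + 1 = i" if "j < i" for j
  proof (cases "j + 1 = i")
    case True
    then show ?thesis using y(2) sym by (metis add_diff_cancel_right')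
  qed (use far y(1) that in auto)
  then have "induced_path E (f(i := y)) (Suc i)"
    using induced_path_snoc[OF E path(1)] y(1) C(2) by blast
  moreover have "\<forall>c\<in>C'. \<forall>j. j + 1 < Suc i \<longrightarrow> \<not> E c ((f(i := y)) j)"
  proof (intro ballI allI impI)
    fix c j assume c: "c \<in> C'" and j: "j + 1 < Suc i"
    show "\<not> E c ((f(i := y)) j)"
    proof (cases "j + 1 = i")
      case True
      then show ?thesis using c C'(1) sym by fastforce
    next
      case False
      then show ?thesis using c j C'(1) far by auto
    qed
  qed
  moreover have "f(i := y) ` {0..<Suc i} \<subseteq> S" using path(2) y(1) C(1)
    unfolding image_fun_upd_lessThan_Suc by blast
  moreover have "C' \<subseteq> S" "C' \<inter> f(i := y) ` {0..<Suc i} = {}"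
    using C'(1) C y(3) unfolding image_fun_upd_lessThan_Suc by auto
  moreover have "\<exists>c\<in>C'. E ((f(i := y)) (Suc i - 1)) c" using x sym by auto
  ultimately show ?thesis using C'(2) unfolding component_path_def by blast
qed

lemma component_path_step:
  fixes t :: real
  assumes E: "sym_irrefl E" and S: "finite S" and P: "component_path E S i f C" and i: "1 \<le> i"
    and deg: "\<forall>v\<in>S. nbr_count E v S \<le> t" and no_pair: "no_anticomplete_pair E S t"
    and t: "0 < t" and C: "4 * t \<le> card C"
  shows "\<exists>g C'. component_path E S (Suc i) g C' \<and> card C - 2 * t < card C'"
proof -
  define w where "w = f (i - 1)"
  define M where "M = {c\<in>C. \<not> E w c}"
  have CS: "C \<subseteq> S" and conn: "connected_set E C" and "\<exists>c\<in>C. E w c" and "w \<in> S"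
    using P i unfolding component_path_def w_def by auto
  have fin: "finite C" using CS S by (blast intro: finite_subset)
  have "C - M \<subseteq> {u\<in>S. E w u}" using CS unfolding M_def by auto
  then have "card (C - M) \<le> nbr_count E w S" unfolding nbr_count_def using S by (intro card_mono) auto
  then have "card (C - M) \<le> t" using deg \<open>w \<in> S\<close> by (meson of_nat_le_iff order_trans)
  moreover have "M \<subseteq> C" unfolding M_def by blast
  then have "card (C - M) = card C - card M" "card M \<le> card C"
    using fin by (auto simp: card_Diff_subset card_mono finite_subset)
  ultimately have M: "card C - t \<le> card M" by (simp add: of_nat_diff)
  have "M \<subseteq> S" "finite M" using \<open>M \<subseteq> C\<close> CS fin by (auto intro: finite_subset)
  moreover have "3 * t \<le> card M" using M C by linarith
  ultimately obtain C' where C': "C' \<noteq> {}" "connected_set E C'" "separated_in E M C'" "card M - t < card C'"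
    using giant_component[OF E _ _ t no_anticomplete_pair_subset[OF no_pair]] by blast
  obtain c where "c \<in> C" "E w c" using \<open>\<exists>c\<in>C. E w c\<close> by blast
  then have "C' \<noteq> C" using C'(3) unfolding separated_in_def M_def by blast
  then obtain x y where xy: "x \<in> C'" "y \<in> C - M" "E x y"
    using connected_set_edge_out[OF conn _ C'(3) C'(1)] unfolding M_def by blast
  have "C' \<subseteq> M" using C'(3) unfolding separated_in_def by blast
  then have "component_path E S (Suc i) (f(i := y)) C'"
    using component_path_snoc[OF E P i _ C'(2) _ _ _ xy(1,3)] xy(2) unfolding M_def w_def by blast
  moreover have "card C - 2 * t < card C'" using C'(4) M by linarith
  ultimately show ?thesis by blast
qed

lemma component_path_init:
  fixes t :: real
  assumes E: "sym_irrefl E" and S: "finite S" "4 * t + 1 \<le> card S" and t: "0 < t"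
    and no_pair: "no_anticomplete_pair E S t"
  shows "\<exists>v C. component_path E S 1 (\<lambda>_. v) C \<and> card S - 2 * t - 1 < card C"
proof -
  have "3 * t \<le> card S" using S(2) t by linarith
  then obtain C0 where C0: "C0 \<noteq> {}" "connected_set E C0" "separated_in E S C0" "card S - t < card C0"
    using giant_component[OF E S(1) _ t no_pair] by blast
  obtain v where v: "v \<in> C0" using C0(1) by blast
  define M where "M = C0 - {v}"
  have "C0 \<subseteq> S" using C0(3) unfolding separated_in_def by blast
  then have fin: "finite C0" using S(1) by (blast intro: finite_subset)
  then have "card M = card C0 - 1" "1 \<le> card C0"
    using v unfolding M_def by (auto simp: Suc_le_eq card_gt_0_iff)
  then have card_M: "card M = real (card C0) - 1" by (simp add: of_nat_diff)
  have "M \<subseteq> S" "finite M" using \<open>C0 \<subseteq> S\<close> fin unfolding M_def by auto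
  moreover have "3 * t \<le> card M" using card_M C0(4) S(2) by linarith
  ultimately obtain C where C: "C \<noteq> {}" "connected_set E C" "separated_in E M C" "card M - t < card C"
    using giant_component[OF E _ _ t no_anticomplete_pair_subset[OF no_pair]] by blast
  have "C \<noteq> C0" using C(3) v unfolding separated_in_def M_def by blast
  moreover have "M \<subseteq> C0" unfolding M_def by blast
  ultimately obtain x y where "x \<in> C" "y \<in> C0 - M" "E x y"
    using connected_set_edge_out[OF C0(2) _ C(3) C(1)] by blast
  then have "x \<in> C" "E v x" using E unfolding M_def sym_irrefl_def by auto
  moreover have "C \<subseteq> S" "C \<inter> {v} = {}" using C(3) \<open>M \<subseteq> S\<close> unfolding separated_in_def M_def by auto
  moreover have "induced_path E (\<lambda>_. v) 1" unfolding induced_path_def by simp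
  moreover have "(\<lambda>_::nat. v) ` {0..<1} = {v}" by auto
  ultimately have "component_path E S 1 (\<lambda>_. v) C"
    using C(2) v \<open>C0 \<subseteq> S\<close> unfolding component_path_def by auto
  moreover have "card S - 2 * t - 1 < card C" using C(4) card_M C0(4) by linarith
  ultimately show ?thesis by blast
qed

lemma long_induced_path:
  fixes t :: real
  assumes E: "sym_irrefl E" and S: "finite S" and deg: "\<forall>v\<in>S. nbr_count E v S \<le> t"
    and no_pair: "no_anticomplete_pair E S t" and t: "0 < t" and k: "1 \<le> k"
    and size: "(2 * k + 4) * t + 1 \<le> card S"
  shows "contains_induced S E k path_adj"
proof -
  have "\<exists>f C. component_path E S i f C \<and> card S - 2 * i * t - 1 < card C" if "1 \<le> i" "i \<le> k" for i
    using that
  proof (induction i)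
    case (Suc i)
    show ?case
    proof (cases "i = 0")
      case True
      have "4 * t \<le> (2 * real k + 4) * t" using t by (intro mult_right_mono) auto
      then have "4 * t + 1 \<le> card S" using size by linarith
      then show ?thesis using component_path_init[OF E S _ t no_pair] True by auto
    next
      case False
      then obtain f C where P: "component_path E S i f C" "card S - 2 * i * t - 1 < card C"
        using Suc by auto
      have "(2 * real i + 4) * t \<le> (2 * real k + 4) * t" using Suc.prems t by (intro mult_right_mono) auto
      then have "4 * t \<le> card C" using P(2) size by (simp add: algebra_simps)
      with component_path_step[OF E S P(1) _ deg no_pair t] False
      obtain g C' where "component_path E S (Suc i) g C'" "card C - 2 * t < card C'" by auto
      then show ?thesis using P(2) by (intro exI[of _ g] exI[of _ C']) (simp add: algebra_simps)
    qed
  qed simp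
  then obtain f C where "component_path E S k f C" using k by blast
  then show ?thesis unfolding component_path_def by (blast intro: contains_induced_pathI)
qed

lemma many_low_degree_vertices:
  fixes \<delta> :: real
  assumes T: "finite T" and \<delta>: "0 < \<delta>" and sparse: "real (edge_count E T T) \<le> \<delta> / 4 * (real (card T))\<^sup>2"
  shows "card T / 2 \<le> card {v\<in>T. nbr_count E v T \<le> \<delta> / 2 * card T}"
proof (cases "T = {}")
  case False
  define S where "S = {v\<in>T. nbr_count E v T \<le> \<delta> / 2 * card T}"
  have "card (T - S) * (\<delta> / 2 * card T) = (\<Sum>v\<in>T - S. \<delta> / 2 * card T)" by simp
  also have "\<dots> \<le> (\<Sum>v\<in>T - S. real (nbr_count E v T))" by (intro sum_mono) (auto simp: S_def)
  also have "\<dots> \<le> (\<Sum>v\<in>T. real (nbr_count E v T))" using T by (intro sum_mono2) auto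
  also have "\<dots> = real (edge_count E T T)" unfolding edge_count_def by simp
  also have "\<dots> \<le> card T / 2 * (\<delta> / 2 * card T)" using sparse by (simp add: power2_eq_square mult_ac)
  finally have "card (T - S) \<le> card T / 2"
    by (rule mult_right_le_imp_le) (use \<delta> False T in \<open>simp add: card_gt_0_iff\<close>)
  moreover have "card (T - S) = card T - card S" "card S \<le> card T"
    using T by (auto simp: S_def card_Diff_subset card_mono)
  ultimately show ?thesis unfolding S_def[symmetric] by (simp add: of_nat_diff)
qed simp

lemma sparse_path_free_anticomplete_pair:
  fixes \<delta> :: real
  assumes E: "sym_irrefl E" and T: "finite T" "4 \<le> card T" and k: "1 \<le> k"
    and \<delta>: "0 < \<delta>" "(4 * real k + 8) * \<delta> \<le> 1"
    and sparse: "real (edge_count E T T) \<le> \<delta> / 4 * (real (card T))\<^sup>2"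
    and no_path: "\<not> contains_induced T E k path_adj"
  shows "\<exists>X Y. X \<subseteq> T \<and> Y \<subseteq> T \<and> X \<inter> Y = {} \<and> \<delta> / 2 * card T \<le> card X \<and>
    \<delta> / 2 * card T \<le> card Y \<and> anticomplete E X Y"
proof (rule ccontr)
  assume no_pair_T: "\<not> ?thesis"
  define S where "S = {v\<in>T. nbr_count E v T \<le> \<delta> / 2 * card T}"
  have card_S: "card T / 2 \<le> card S" unfolding S_def by (rule many_low_degree_vertices[OF T(1) \<delta>(1) sparse])
  then have half: "\<delta> / 2 * card T \<le> \<delta> * card S" using \<delta>(1) by (simp add: field_simps)
  have ST: "S \<subseteq> T" unfolding S_def by blast
  have "\<forall>v\<in>S. nbr_count E v S \<le> \<delta> * card S"
  proof
    fix v assume "v \<in> S"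
    then have "nbr_count E v T \<le> \<delta> / 2 * card T" unfolding S_def by blast
    moreover have "nbr_count E v S \<le> nbr_count E v T" by (rule nbr_count_mono[OF T(1) ST])
    ultimately show "nbr_count E v S \<le> \<delta> * card S" using half by linarith
  qed
  moreover have "no_anticomplete_pair E S (\<delta> * card S)"
    unfolding no_anticomplete_pair_def
  proof (intro allI impI)
    fix X Y assume "X \<subseteq> S" "Y \<subseteq> S" "X \<inter> Y = {}" "\<delta> * card S \<le> card X" "\<delta> * card S \<le> card Y"
    then show "\<not> anticomplete E X Y" using no_pair_T ST half by (meson order_trans)
  qed
  moreover have "(2 * real k + 4) * (\<delta> * card S) + 1 \<le> card S"
  proof -
    have "(2 * real k + 4) * \<delta> \<le> 1 / 2" using \<delta> by (simp add: algebra_simps)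
    from mult_right_mono[OF this, of "real (card S)"]
    have "(2 * real k + 4) * (\<delta> * card S) \<le> card S / 2" by (simp add: mult.assoc)
    moreover have "2 \<le> card S" using card_S T(2) by linarith
    ultimately show ?thesis by linarith
  qed
  moreover have "0 < \<delta> * card S" using card_S T(2) \<delta>(1) by simp
  ultimately have "contains_induced S E k path_adj"
    using long_induced_path[OF E finite_subset[OF ST T(1)]] k by blast
  with no_path ST show False by (blast intro: contains_induced_mono)
qed

lemma sparse_set_anticomplete_pair:
  assumes E: "sym_irrefl E" and T: "finite T" "4 \<le> card T" and k: "1 \<le> k"
    and sparse: "sparse_set E (32 * k + 64) (1 / (32 * real k + 64)) T"
    and no_path: "\<not> contains_induced T E k path_adj"
  shows "\<exists>X Y. X \<subseteq> T \<and> Y \<subseteq> T \<and> X \<inter> Y = {} \<and> 1 / (8 * real k + 16) * card T \<le> card X \<and>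
    1 / (8 * real k + 16) * card T \<le> card Y \<and> anticomplete E X Y"
proof -
  define \<delta> :: real where "\<delta> = 1 / (4 * real k + 8)"
  have "real (edge_count E T T) \<le> (1 / real (32 * k + 64) + 1 / (32 * real k + 64)) * (real (card T))\<^sup>2"
    using sparse_set_edge_count[OF sparse] by simp
  also have "1 / real (32 * k + 64) + 1 / (32 * real k + 64) = \<delta> / 4"
    unfolding \<delta>_def by (simp add: field_simps)
  finally have sparse_T: "real (edge_count E T T) \<le> \<delta> / 4 * (real (card T))\<^sup>2" .
  have "0 < \<delta>" "(4 * real k + 8) * \<delta> \<le> 1" unfolding \<delta>_def by simp_all
  from sparse_path_free_anticomplete_pair[OF E T k this sparse_T no_path]
  show ?thesis unfolding \<delta>_def by simp
qed

definition path_copath_free :: "nat \<Rightarrow> nat set \<Rightarrow> (nat \<Rightarrow> nat \<Rightarrow> bool) \<Rightarrow> bool" where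
  "path_copath_free k V E \<longleftrightarrow> \<not> contains_induced V E k path_adj \<and> \<not> contains_induced V E k copath_adj"

definition homogeneous_pairs :: "(nat set \<Rightarrow> (nat \<Rightarrow> nat \<Rightarrow> bool) \<Rightarrow> bool) \<Rightarrow> real \<Rightarrow> bool" where
  "homogeneous_pairs Q c \<longleftrightarrow>
     (\<forall>V E. simple_graph V E \<and> card V \<ge> 2 \<and> Q V E \<longrightarrow>
        (\<exists>X Y. X \<subseteq> V \<and> Y \<subseteq> V \<and> X \<inter> Y = {} \<and>
           real (card X) \<ge> c * real (card V) \<and> real (card Y) \<ge> c * real (card V) \<and>
           ((\<forall>x\<in>X. \<forall>y\<in>Y. E x y) \<or> (\<forall>x\<in>X. \<forall>y\<in>Y. \<not> E x y))))"

definition hereditary :: "(nat set \<Rightarrow> (nat \<Rightarrow> nat \<Rightarrow> bool) \<Rightarrow> bool) \<Rightarrow> bool" where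
  "hereditary Q \<longleftrightarrow> (\<forall>V E U. Q V E \<longrightarrow> U \<subseteq> V \<longrightarrow> Q U E)"

lemma hereditary_path_copath_free: "hereditary (path_copath_free k)"
  unfolding hereditary_def path_copath_free_def by (meson contains_induced_mono)

lemma homogeneous_pairs_mono:
  assumes "homogeneous_pairs Q c" "c' \<le> c"
  shows "homogeneous_pairs Q c'"
  unfolding homogeneous_pairs_def
proof (intro allI impI)
  fix V E assume "simple_graph V E \<and> card V \<ge> 2 \<and> Q V E"
  from assms(1)[unfolded homogeneous_pairs_def, rule_format, OF this]
  obtain X Y where XY: "X \<subseteq> V" "Y \<subseteq> V" "X \<inter> Y = {}" "c * card V \<le> card X" "c * card V \<le> card Y"
      "(\<forall>x\<in>X. \<forall>y\<in>Y. E x y) \<or> (\<forall>x\<in>X. \<forall>y\<in>Y. \<not> E x y)"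
    by (elim exE conjE)
  have "c' * card V \<le> c * card V" using assms(2) by (simp add: mult_right_mono)
  then have "c' * card V \<le> card X" "c' * card V \<le> card Y" using XY(4,5) by linarith+
  then show "\<exists>X Y. X \<subseteq> V \<and> Y \<subseteq> V \<and> X \<inter> Y = {} \<and>
      real (card X) \<ge> c' * real (card V) \<and> real (card Y) \<ge> c' * real (card V) \<and>
      ((\<forall>x\<in>X. \<forall>y\<in>Y. E x y) \<or> (\<forall>x\<in>X. \<forall>y\<in>Y. \<not> E x y))"
    using XY(1-3,6) by (intro exI[of _ X] exI[of _ Y] conjI) assumption+
qed

text \<open>Two distinct vertices always form a homogeneous pair, so constants \<open>c\<close> with \<open>c * card V \<le> 1\<close>
  need no argument.\<close>
lemma singleton_homogeneous_pair:
  fixes c :: real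
  assumes "finite V" "2 \<le> card V" "c * card V \<le> 1"
  shows "\<exists>X Y. X \<subseteq> V \<and> Y \<subseteq> V \<and> X \<inter> Y = {} \<and>
      real (card X) \<ge> c * real (card V) \<and> real (card Y) \<ge> c * real (card V) \<and>
      ((\<forall>x\<in>X. \<forall>y\<in>Y. E x y) \<or> (\<forall>x\<in>X. \<forall>y\<in>Y. \<not> E x y))"
proof -
  have "V \<noteq> {}" using assms(2) by auto
  then obtain u where u: "u \<in> V" by blast
  then have "card (V - {u}) \<noteq> 0" using assms(1,2) by simp
  then obtain v where "v \<in> V - {u}" by (metis card.empty ex_in_conv)
  with u assms(3) show ?thesis by (intro exI[of _ "{u}"] exI[of _ "{v}"]) auto
qed

lemma linear_homogeneous_pairs:
  assumes k: "1 \<le> k"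
  shows "\<exists>c>0. homogeneous_pairs (path_copath_free k) c"
proof -
  define r where "r = 32 * k + 64"
  define \<eta> :: real where "\<eta> = 1 / (32 * real k + 64)"
  define \<delta> :: real where "\<delta> = 1 / (8 * real k + 16)"
  have \<eta>: "0 < \<eta>" "\<eta> \<le> 1" unfolding \<eta>_def by simp_all
  obtain \<mu> where \<mu>: "rodl_constant k r r \<eta> \<mu>" using rodl_constant_exists[OF \<eta>] by blast
  then have "0 < \<mu>" unfolding rodl_constant_def by blast
  define c where "c = min (\<mu> * \<delta>) (\<mu> / 4)"
  have "0 < c" unfolding c_def \<delta>_def using \<open>0 < \<mu>\<close> by simp
  moreover have "homogeneous_pairs (path_copath_free k) c" unfolding homogeneous_pairs_def
  proof (intro allI impI)
    fix V E assume "simple_graph V E \<and> card V \<ge> 2 \<and> path_copath_free k V E"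
    then have E: "sym_irrefl E" and V: "finite V" "2 \<le> card V"
      and no_path: "\<not> contains_induced V E k path_adj"
      and no_copath: "\<not> contains_induced V (compl_adj E) k path_adj"
      unfolding simple_graph_def sym_irrefl_def path_copath_free_def contains_induced_compl_path by auto
    obtain T where T: "T \<subseteq> V" "\<mu> * card V \<le> card T"
        "sparse_set E r \<eta> T \<or> sparse_set (compl_adj E) r \<eta> T"
      using rodl_constantD[OF \<mu> E V(1) no_path] by blast
    have fin: "finite T" using T(1) V(1) by (blast intro: finite_subset)
    have cT: "c * card V \<le> \<delta> * card T"
    proof -
      have "c * card V \<le> \<mu> * \<delta> * card V" unfolding c_def by (intro mult_right_mono) auto
      also have "\<dots> \<le> \<delta> * card T" using mult_left_mono[OF T(2), of \<delta>] unfolding \<delta>_def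
        by (simp add: mult_ac)
      finally show ?thesis .
    qed
    have homogeneous: "\<exists>X Y. X \<subseteq> V \<and> Y \<subseteq> V \<and> X \<inter> Y = {} \<and>
        real (card X) \<ge> c * real (card V) \<and> real (card Y) \<ge> c * real (card V) \<and>
        ((\<forall>x\<in>X. \<forall>y\<in>Y. E x y) \<or> (\<forall>x\<in>X. \<forall>y\<in>Y. \<not> E x y))"
      if "X \<subseteq> T" "Y \<subseteq> T" "X \<inter> Y = {}" "\<delta> * card T \<le> card X" "\<delta> * card T \<le> card Y"
        "(\<forall>x\<in>X. \<forall>y\<in>Y. E x y) \<or> (\<forall>x\<in>X. \<forall>y\<in>Y. \<not> E x y)" for X Y
    proof -
      have "X \<subseteq> V" "Y \<subseteq> V" using that(1,2) T(1) by auto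
      moreover have "c * card V \<le> card X" "c * card V \<le> card Y" using that(4,5) cT by linarith+
      ultimately show ?thesis using that(3,6) by (intro exI[of _ X] exI[of _ Y] conjI) assumption+
    qed
    show "\<exists>X Y. X \<subseteq> V \<and> Y \<subseteq> V \<and> X \<inter> Y = {} \<and>
        real (card X) \<ge> c * real (card V) \<and> real (card Y) \<ge> c * real (card V) \<and>
        ((\<forall>x\<in>X. \<forall>y\<in>Y. E x y) \<or> (\<forall>x\<in>X. \<forall>y\<in>Y. \<not> E x y))"
    proof (cases "4 \<le> card T")
      case True
      have no_path_T: "\<not> contains_induced T E k path_adj" "\<not> contains_induced T (compl_adj E) k path_adj"
        using not_contains_induced_mono[OF _ T(1)] no_path no_copath by simp_all
      from T(3) show ?thesis
      proof
        assume "sparse_set E r \<eta> T"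
        from sparse_set_anticomplete_pair[OF E fin True k this[unfolded r_def \<eta>_def] no_path_T(1)]
        obtain X Y where XY: "X \<subseteq> T" "Y \<subseteq> T" "X \<inter> Y = {}" "\<delta> * card T \<le> card X"
            "\<delta> * card T \<le> card Y" "anticomplete E X Y"
          unfolding \<delta>_def by (elim exE conjE)
        have "\<forall>x\<in>X. \<forall>y\<in>Y. \<not> E x y" using XY(6) unfolding anticomplete_def .
        then show ?thesis by (rule homogeneous[OF XY(1-5) disjI2])
      next
        assume "sparse_set (compl_adj E) r \<eta> T"
        from sparse_set_anticomplete_pair[OF sym_irrefl_compl_adj[OF E] fin True k
            this[unfolded r_def \<eta>_def] no_path_T(2)]
        obtain X Y where XY: "X \<subseteq> T" "Y \<subseteq> T" "X \<inter> Y = {}" "\<delta> * card T \<le> card X"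
            "\<delta> * card T \<le> card Y" "anticomplete (compl_adj E) X Y"
          unfolding \<delta>_def by (elim exE conjE)
        have "\<forall>x\<in>X. \<forall>y\<in>Y. E x y"
        proof (intro ballI)
          fix x y assume xy: "x \<in> X" "y \<in> Y"
          then have "x \<noteq> y" using XY(3) by blast
          moreover have "\<not> compl_adj E x y" using XY(6) xy unfolding anticomplete_def by blast
          ultimately show "E x y" unfolding compl_adj_def by simp
        qed
        then show ?thesis by (rule homogeneous[OF XY(1-5) disjI1])
      qed
    next
      case False
      then have "\<mu> * card V \<le> 3" using T(2) by linarith
      moreover have "c \<le> \<mu> / 4" unfolding c_def by simp
      then have "c * card V \<le> \<mu> * card V / 4" using mult_right_mono[of c "\<mu> / 4" "card V"] by simp
      ultimately have "c * card V \<le> 1" by linarith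
      from singleton_homogeneous_pair[OF V this] show ?thesis .

    qed
  qed
  ultimately show ?thesis by (intro exI[of _ c] conjI)
qed

lemma clique_stable_join_complete:
  assumes E: "\<forall>x y. E x y \<longrightarrow> E y x" and XY: "X \<inter> Y = {}" "\<forall>x\<in>X. \<forall>y\<in>Y. E x y"
    and sub: "K\<^sub>X \<subseteq> X" "I\<^sub>X \<subseteq> X" "K\<^sub>Y \<subseteq> Y" "I\<^sub>Y \<subseteq> Y" and fin: "finite K\<^sub>X" "finite K\<^sub>Y"
    and cl: "is_clique E K\<^sub>X" "is_clique E K\<^sub>Y" and st: "is_stable E I\<^sub>X" "is_stable E I\<^sub>Y"
  shows "\<exists>K I. K \<subseteq> X \<union> Y \<and> I \<subseteq> X \<union> Y \<and> is_clique E K \<and> is_stable E I \<and>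
    card K\<^sub>X * card I\<^sub>X + card K\<^sub>Y * card I\<^sub>Y \<le> card K * card I"
proof -
  define I where "I = (if card I\<^sub>Y \<le> card I\<^sub>X then I\<^sub>X else I\<^sub>Y)"
  have "is_clique E (K\<^sub>X \<union> K\<^sub>Y)" unfolding is_clique_def
  proof (intro ballI impI)
    fix x y assume "x \<in> K\<^sub>X \<union> K\<^sub>Y" "y \<in> K\<^sub>X \<union> K\<^sub>Y" "x \<noteq> y"
    then show "E x y" using cl sub XY(2) E unfolding is_clique_def by (elim UnE) (meson subsetD)+
  qed
  moreover have "is_stable E I" using st unfolding I_def by simp
  moreover have "card (K\<^sub>X \<union> K\<^sub>Y) = card K\<^sub>X + card K\<^sub>Y" using fin sub XY(1) by (intro card_Un_disjoint) auto
  then have "card K\<^sub>X * card I\<^sub>X + card K\<^sub>Y * card I\<^sub>Y \<le> card (K\<^sub>X \<union> K\<^sub>Y) * card I"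
    unfolding I_def by (simp add: add_mono distrib_right)
  moreover have "K\<^sub>X \<union> K\<^sub>Y \<subseteq> X \<union> Y" "I \<subseteq> X \<union> Y" using sub unfolding I_def by auto
  ultimately show ?thesis by (intro exI[of _ "K\<^sub>X \<union> K\<^sub>Y"] exI[of _ I] conjI)
qed

lemma clique_stable_join_anticomplete:
  assumes E: "\<forall>x y. E x y \<longrightarrow> E y x" and XY: "X \<inter> Y = {}" "\<forall>x\<in>X. \<forall>y\<in>Y. \<not> E x y"
    and sub: "K\<^sub>X \<subseteq> X" "I\<^sub>X \<subseteq> X" "K\<^sub>Y \<subseteq> Y" "I\<^sub>Y \<subseteq> Y" and fin: "finite I\<^sub>X" "finite I\<^sub>Y"
    and cl: "is_clique E K\<^sub>X" "is_clique E K\<^sub>Y" and st: "is_stable E I\<^sub>X" "is_stable E I\<^sub>Y"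
  shows "\<exists>K I. K \<subseteq> X \<union> Y \<and> I \<subseteq> X \<union> Y \<and> is_clique E K \<and> is_stable E I \<and>
    card K\<^sub>X * card I\<^sub>X + card K\<^sub>Y * card I\<^sub>Y \<le> card K * card I"
proof -
  define K where "K = (if card K\<^sub>Y \<le> card K\<^sub>X then K\<^sub>X else K\<^sub>Y)"
  have "is_stable E (I\<^sub>X \<union> I\<^sub>Y)" unfolding is_stable_def
  proof (intro ballI)
    fix x y assume "x \<in> I\<^sub>X \<union> I\<^sub>Y" "y \<in> I\<^sub>X \<union> I\<^sub>Y"
    then show "\<not> E x y" using st sub XY(2) E unfolding is_stable_def by (elim UnE) (meson subsetD)+
  qed
  moreover have "is_clique E K" using cl unfolding K_def by simp
  moreover have "card (I\<^sub>X \<union> I\<^sub>Y) = card I\<^sub>X + card I\<^sub>Y" using fin sub XY(1) by (intro card_Un_disjoint) auto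
  then have "card K\<^sub>X * card I\<^sub>X + card K\<^sub>Y * card I\<^sub>Y \<le> card K * card (I\<^sub>X \<union> I\<^sub>Y)"
    unfolding K_def by (simp add: add_mono distrib_left)
  moreover have "K \<subseteq> X \<union> Y" "I\<^sub>X \<union> I\<^sub>Y \<subseteq> X \<union> Y" using sub unfolding K_def by auto
  ultimately show ?thesis by (intro exI[of _ K] exI[of _ "I\<^sub>X \<union> I\<^sub>Y"] conjI)
qed

text \<open>Erdos--Hajnal for a hereditary class with linear homogeneous pairs: by induction, a graph on
  \<open>n\<close> vertices has a clique \<open>K\<close> and a stable set \<open>I\<close> with \<open>n\<^sup>b \<le> |K| |I|\<close>, where \<open>2 c\<^sup>b \<ge> 1\<close>
  makes the bound additive over the two halves of a homogeneous pair.\<close>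
lemma clique_stable_product:
  fixes c b :: real
  assumes hereditary: "hereditary Q" and pairs: "homogeneous_pairs Q c"
    and c: "0 < c" and b: "0 < b" "1 \<le> 2 * c powr b"
  shows "simple_graph V E \<Longrightarrow> Q V E \<Longrightarrow> \<exists>K I. K \<subseteq> V \<and> I \<subseteq> V \<and> is_clique E K \<and> is_stable E I \<and>
     real (card V) powr b \<le> real (card K) * real (card I)"
proof (induction "card V" arbitrary: V rule: less_induct)
  case less
  have V: "finite V" and E: "\<forall>x y. E x y \<longrightarrow> E y x" "\<forall>x. \<not> E x x"
    using less.prems(1) unfolding simple_graph_def by auto
  show ?case
  proof (cases "2 \<le> card V")
    case False
    then consider "card V = 0" | "card V = 1" by linarith
    then consider "V = {}" | v where "V = {v}" using V by (metis card_0_eq card_1_singletonE)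
    then show ?thesis
    proof cases
      case 1 then show ?thesis by (intro exI[of _ "{}"]) (auto simp: is_clique_def is_stable_def)
    next
      case 2 then show ?thesis using E(2) by (intro exI[of _ "{v}"]) (auto simp: is_clique_def is_stable_def)
    qed
  next
    case True
    define n where "n = real (card V)"
    obtain X Y where XY: "X \<subseteq> V" "Y \<subseteq> V" "X \<inter> Y = {}" "c * n \<le> card X" "c * n \<le> card Y"
        "(\<forall>x\<in>X. \<forall>y\<in>Y. E x y) \<or> (\<forall>x\<in>X. \<forall>y\<in>Y. \<not> E x y)"
      using pairs[unfolded homogeneous_pairs_def, rule_format, OF conjI[OF less.prems(1) conjI[OF True less.prems(2)]]]
      unfolding n_def by (elim exE conjE)
    have "0 < c * n" using c True unfolding n_def by simp
    then have "X \<noteq> {}" "Y \<noteq> {}" using XY(4,5) by auto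
    then have "X \<subset> V" "Y \<subset> V" using XY(1-3) by blast+
    then have smaller: "card X < card V" "card Y < card V" using V by (simp_all add: psubset_card_mono)
    have fin: "finite X" "finite Y" using XY(1,2) V by (simp_all add: finite_subset)
    then have graphs: "simple_graph X E" "simple_graph Y E" using E unfolding simple_graph_def by simp_all
    have Q: "Q X E" "Q Y E" using hereditary less.prems(2) XY(1,2) unfolding hereditary_def by blast+
    obtain K\<^sub>X I\<^sub>X where
      X: "K\<^sub>X \<subseteq> X" "I\<^sub>X \<subseteq> X" "is_clique E K\<^sub>X" "is_stable E I\<^sub>X" "card X powr b \<le> real (card K\<^sub>X) * real (card I\<^sub>X)"
      using less.hyps[OF smaller(1) graphs(1) Q(1)] by blast
    obtain K\<^sub>Y I\<^sub>Y where
      Y: "K\<^sub>Y \<subseteq> Y" "I\<^sub>Y \<subseteq> Y" "is_clique E K\<^sub>Y" "is_stable E I\<^sub>Y" "card Y powr b \<le> real (card K\<^sub>Y) * real (card I\<^sub>Y)"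
      using less.hyps[OF smaller(2) graphs(2) Q(2)] by blast
    have fin_XY: "finite K\<^sub>X" "finite I\<^sub>X" "finite K\<^sub>Y" "finite I\<^sub>Y"
      using X(1,2) Y(1,2) fin by (simp_all add: finite_subset)
    have "n powr b \<le> 2 * c powr b * n powr b"
      using mult_right_mono[OF b(2), of "n powr b"] by simp
    also have "\<dots> = 2 * (c * n) powr b" using c unfolding n_def by (simp add: powr_mult)
    also have "\<dots> \<le> card X powr b + card Y powr b"
      using powr_mono2[OF _ _ XY(4), of b] powr_mono2[OF _ _ XY(5), of b] b(1) \<open>0 < c * n\<close> by simp
    also have "\<dots> \<le> card K\<^sub>X * card I\<^sub>X + card K\<^sub>Y * card I\<^sub>Y" using X(5) Y(5) by simp
    finally have bound: "n powr b \<le> card K\<^sub>X * card I\<^sub>X + card K\<^sub>Y * card I\<^sub>Y" .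
    have "\<exists>K I. K \<subseteq> X \<union> Y \<and> I \<subseteq> X \<union> Y \<and> is_clique E K \<and> is_stable E I \<and>
        card K\<^sub>X * card I\<^sub>X + card K\<^sub>Y * card I\<^sub>Y \<le> card K * card I"
      using XY(6)
    proof
      assume "\<forall>x\<in>X. \<forall>y\<in>Y. E x y"
      from clique_stable_join_complete[OF E(1) XY(3) this X(1,2) Y(1,2) fin_XY(1,3) X(3) Y(3) X(4) Y(4)]
      show ?thesis .
    next
      assume "\<forall>x\<in>X. \<forall>y\<in>Y. \<not> E x y"
      from clique_stable_join_anticomplete[OF E(1) XY(3) this X(1,2) Y(1,2) fin_XY(2,4) X(3) Y(3) X(4) Y(4)]
      show ?thesis .
    qed
    then obtain K I where KI: "K \<subseteq> X \<union> Y" "I \<subseteq> X \<union> Y" "is_clique E K" "is_stable E I"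
        "card K\<^sub>X * card I\<^sub>X + card K\<^sub>Y * card I\<^sub>Y \<le> card K * card I"
      by (elim exE conjE)
    from KI(5) have "real (card K\<^sub>X * card I\<^sub>X + card K\<^sub>Y * card I\<^sub>Y) \<le> real (card K * card I)"
      by (rule of_nat_mono)
    with bound have "real (card V) powr b \<le> real (card K) * real (card I)" unfolding n_def by simp
    moreover have "K \<subseteq> V" "I \<subseteq> V" using KI(1,2) XY(1,2) by auto
    ultimately show ?thesis using KI(3,4) by (intro exI[of _ K] exI[of _ I] conjI)
  qed
qed

lemma polynomial_clique_or_stable:
  assumes hereditary: "hereditary Q" and pairs: "homogeneous_pairs Q c"
    and c: "0 < c"
  shows "\<exists>c'::real. c' > 0 \<and> (\<forall>V E. simple_graph V E \<and> Q V E \<longrightarrow>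
    (\<exists>S. S \<subseteq> V \<and> (is_clique E S \<or> is_stable E S) \<and> real (card S) \<ge> real (card V) powr c'))"
proof -
  define c\<^sub>0 :: real where "c\<^sub>0 = min c (1 / 2)"
  define b where "b = log c\<^sub>0 (1 / 2)"
  have c\<^sub>0: "0 < c\<^sub>0" "c\<^sub>0 < 1" using c unfolding c\<^sub>0_def by auto
  then have "0 < b" unfolding b_def log_def by (simp add: divide_neg_neg ln_less_zero)
  have "c\<^sub>0 powr b = 1 / 2" unfolding b_def using c\<^sub>0 by (simp add: powr_log_cancel)
  then have half: "1 \<le> 2 * c\<^sub>0 powr b" by simp
  have pairs\<^sub>0: "homogeneous_pairs Q c\<^sub>0" using homogeneous_pairs_mono[OF pairs] unfolding c\<^sub>0_def by simp
  have main: "\<exists>S. S \<subseteq> V \<and> (is_clique E S \<or> is_stable E S) \<and> real (card S) \<ge> real (card V) powr (b / 2)"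
    if G: "simple_graph V E" "Q V E" for V E
  proof -
    from clique_stable_product[OF hereditary pairs\<^sub>0 c\<^sub>0(1) \<open>0 < b\<close> half G]
    obtain K I where KI: "K \<subseteq> V" "I \<subseteq> V" "is_clique E K" "is_stable E I"
      "real (card V) powr b \<le> real (card K) * real (card I)"
      by (elim exE conjE)
    define p where "p = real (card V) powr (b / 2)"
    have "real (card V) powr b = p * p" unfolding p_def by (simp flip: powr_add)
    have "p \<le> card K \<or> p \<le> card I"
    proof (rule ccontr)
      assume "\<not> ?thesis"
      then have "real (card K) * card I < p * p" by (intro mult_strict_mono) auto
      with KI(5) \<open>real (card V) powr b = p * p\<close> show False by linarith
    qed
    then show ?thesis
    proof
      assume "p \<le> card K"
      with KI(1,3) show ?thesis unfolding p_def by (intro exI[of _ K] conjI disjI1)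
    next
      assume "p \<le> card I"
      with KI(2,4) show ?thesis unfolding p_def by (intro exI[of _ I] conjI disjI2)
    qed
  qed
  have "0 < b / 2" using \<open>0 < b\<close> by simp
  moreover have "\<forall>V E. simple_graph V E \<and> Q V E \<longrightarrow>
      (\<exists>S. S \<subseteq> V \<and> (is_clique E S \<or> is_stable E S) \<and> real (card S) \<ge> real (card V) powr (b / 2))"
    using main by blast
  ultimately show ?thesis by (intro exI[of _ "b / 2"] conjI)
qed

theorem theorem4:
  shows "(\<forall>k::nat. k \<ge> 1 \<longrightarrow> (\<exists>c::real. c > 0 \<and>
           (\<forall>V E. simple_graph V E \<and> card V \<ge> 2 \<and>
              \<not> contains_induced V E k path_adj \<and> \<not> contains_induced V E k copath_adj \<longrightarrow>
              (\<exists>X Y. X \<subseteq> V \<and> Y \<subseteq> V \<and> X \<inter> Y = {} \<and>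
                 real (card X) \<ge> c * real (card V) \<and> real (card Y) \<ge> c * real (card V) \<and>
                 ((\<forall>x\<in>X. \<forall>y\<in>Y. E x y) \<or> (\<forall>x\<in>X. \<forall>y\<in>Y. \<not> E x y))))))
   \<and> (\<forall>k::nat. k \<ge> 1 \<longrightarrow> (\<exists>c'::real. c' > 0 \<and>
           (\<forall>V E. simple_graph V E \<and>
              \<not> contains_induced V E k path_adj \<and> \<not> contains_induced V E k copath_adj \<longrightarrow>
              (\<exists>S. S \<subseteq> V \<and> (is_clique E S \<or> is_stable E S) \<and>
                 real (card S) \<ge> real (card V) powr c'))))"
proof (intro conjI allI impI)
  fix k :: nat assume "k \<ge> 1"
  then obtain c where c: "0 < c" "homogeneous_pairs (path_copath_free k) c"
    using linear_homogeneous_pairs by blast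
  show "\<exists>c::real. c > 0 \<and>
           (\<forall>V E. simple_graph V E \<and> card V \<ge> 2 \<and>
              \<not> contains_induced V E k path_adj \<and> \<not> contains_induced V E k copath_adj \<longrightarrow>
              (\<exists>X Y. X \<subseteq> V \<and> Y \<subseteq> V \<and> X \<inter> Y = {} \<and>
                 real (card X) \<ge> c * real (card V) \<and> real (card Y) \<ge> c * real (card V) \<and>
                 ((\<forall>x\<in>X. \<forall>y\<in>Y. E x y) \<or> (\<forall>x\<in>X. \<forall>y\<in>Y. \<not> E x y))))"
    by (rule exI[of _ c], rule conjI[OF c(1)])
      (use c(2) in \<open>simp only: homogeneous_pairs_def path_copath_free_def\<close>)
  from polynomial_clique_or_stable[OF hereditary_path_copath_free c(2,1)]
  show "\<exists>c'::real. c' > 0 \<and>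
           (\<forall>V E. simple_graph V E \<and>
              \<not> contains_induced V E k path_adj \<and> \<not> contains_induced V E k copath_adj \<longrightarrow>
              (\<exists>S. S \<subseteq> V \<and> (is_clique E S \<or> is_stable E S) \<and>
                 real (card S) \<ge> real (card V) powr c'))"
    unfolding path_copath_free_def .
qed

end
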